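(* Let $L$ be a finite distributive lattice such that $\widetilde L$ is a regular mosaic, and let $F:\bigcup_{x\in c(L)}\mathcal D_x(\mathcal J(L))\to\mathbb R$. Define $\widetilde F:\widetilde L\to\mathbb R$ by $\widetilde F(y,z):=F(1_{\eta(y)}-1_{\eta(z)})$, and let $\widetilde m:\widetilde L\to\mathbb R$ be its Möbius transform, i.e. the unique function with $\widetilde F(x,y)=\sum_{(z,t)\in\widetilde L,\,(z,t)\le(x,y)}\widetilde m(z,t)$ for all $(x,y)\in\widetilde L$. Then for every $f\in\widetilde{|L|}$, $$\overline F(f)=\sum_{(s,t)\in\widetilde L}\widetilde m(s,t)\Big[\min_{j\in\eta(s)}f^+(j)\ \wedge\ \min_{j\in\eta(t)}f^-(j)\Big],$$ where $f^+:=\max(f,0)$, $f^-:=\max(-f,0)$, $\wedge$ denotes minimum, and a minimum over the empty set is $1$.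
   Context: $L$ has least element $\bot$ and greatest element $\top$; $\mathcal J(L)$ is its set of join-irreducible elements (elements covering exactly one element) with the induced order; $\eta(y):=\{j\in\mathcal J(L): j\le y\}$. $c(L)$ is the set of complemented elements ($x$ with some $x'$, unique, such that $x\wedge x'=\bot$, $x\vee x'=\top$). $\widetilde L:=\{(x,y)\in L^2: x\wedge y=\bot\}$ with the product order. $\widetilde L$ is a regular mosaic if every connected component of the Hasse diagram of $\mathcal J(L)$ has a least element. A map $g$ on $\mathcal J(L)$ is nonincreasing if $j\le j'$ implies $g(j)\ge g(j')$. For $x\in c(L)$: $\mathcal D_x(\mathcal J(L))$ is the set of maps $\xi:\mathcal J(L)\to\{-1,0,1\}$ with $|\xi|$ nonincreasing, $\xi\ge0$ on $\eta(x)$, $\xi\le0$ on $\eta(x')$; $\mathcal C_x(\mathcal J(L))$ is the set of maps $f:\mathcal J(L)\to[-1,1]$ with $|f|$ nonincreasing, $f\ge0$ on $\eta(x)$, $f\le0$ on $\eta(x')$; and $\widetilde{|L|}:=\bigcup_{x\in c(L)}\mathcal C_x(\mathcal J(L))$. For $f\in\widetilde{|L|}$, $|f|$ can be written uniquely as $|f|=\sum_{i=0}^p\alpha_i1_{X_i}$ with $X_0\subsetneq\cdots\subsetneq X_p$ downsets of $\mathcal J(L)$, $\alpha_i>0$, $\sum_i\alpha_i=1$; the (bipolar) natural extension is $\overline F(f):=\sum_{i=0}^p\alpha_iF(1_{X_i\cap\eta(x)}-1_{X_i\cap\eta(x')})$, where $x\in c(L)$ is any element with $f\in\mathcal C_x(\mathcal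 J(L))$ (the value does not depend on this choice). *)

theory Defs
  imports Complex_Main "HOL-Library.Indicator_Function"
begin

definition covers :: "'a::order \<Rightarrow> 'a \<Rightarrow> bool" where
  "covers y x \<longleftrightarrow> x < y \<and> \<not> (\<exists>z. x < z \<and> z < y)"

definition JI :: "'a::{finite,bounded_lattice} set" where
  "JI = {j. card {x. covers j x} = 1}"

definition eta :: "'a::{finite,bounded_lattice} \<Rightarrow> 'a set" where
  "eta y = {j \<in> JI. j \<le> y}"

definition complemented :: "'a::bounded_lattice set" where
  "complemented = {x. \<exists>x'. inf x x' = bot \<and> sup x x' = top}"

definition cmpl :: "'a::bounded_lattice \<Rightarrow> 'a" where
  "cmpl x = (THE x'. inf x x' = bot \<and> sup x x' = top)"

definition Ltilde :: "('a::bounded_lattice \<times> 'a) set" where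
  "Ltilde = {(x, y). inf x y = bot}"

definition hasseJ :: "('a::{finite,bounded_lattice} \<times> 'a) set" where
  "hasseJ = {(j, k). j \<in> JI \<and> k \<in> JI \<and> j < k \<and>
                     \<not> (\<exists>l \<in> JI. j < l \<and> l < k)}"

definition componentJ :: "'a::{finite,bounded_lattice} \<Rightarrow> 'a set" where
  "componentJ j = {k \<in> JI. (j, k) \<in> (hasseJ \<union> hasseJ\<inverse>)\<^sup>*}"

definition regular_mosaic :: "'a::{finite,bounded_lattice} itself \<Rightarrow> bool" where
  "regular_mosaic _ \<longleftrightarrow>
     (\<forall>j \<in> (JI :: 'a set). \<exists>m \<in> componentJ j. \<forall>k \<in> componentJ j. m \<le> k)"

definition abs_nonincr :: "('a::{finite,bounded_lattice} \<Rightarrow> real) \<Rightarrow> bool" where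
  "abs_nonincr g \<longleftrightarrow> (\<forall>j \<in> JI. \<forall>j' \<in> JI. j \<le> j' \<longrightarrow> \<bar>g j'\<bar> \<le> \<bar>g j\<bar>)"

(* Functions on J(L) are represented as functions on 'a that vanish outside J(L). *)
definition Dx :: "'a::{finite,bounded_lattice} \<Rightarrow> ('a \<Rightarrow> real) set" where
  "Dx x = {\<xi>. (\<forall>j. j \<notin> JI \<longrightarrow> \<xi> j = 0) \<and> (\<forall>j \<in> JI. \<xi> j \<in> {-1, 0, 1})
             \<and> abs_nonincr \<xi> \<and> (\<forall>j \<in> eta x. \<xi> j \<ge> 0) \<and> (\<forall>j \<in> eta (cmpl x). \<xi> j \<le> 0)}"

definition Cx :: "'a::{finite,bounded_lattice} \<Rightarrow> ('a \<Rightarrow> real) set" where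
  "Cx x = {f. (\<forall>j. j \<notin> JI \<longrightarrow> f j = 0) \<and> (\<forall>j \<in> JI. -1 \<le> f j \<and> f j \<le> 1)
             \<and> abs_nonincr f \<and> (\<forall>j \<in> eta x. f j \<ge> 0) \<and> (\<forall>j \<in> eta (cmpl x). f j \<le> 0)}"

definition geomreal :: "('a::{finite,bounded_lattice} \<Rightarrow> real) set" where
  "geomreal = (\<Union>x \<in> complemented. Cx x)"

definition downsetJ :: "'a::{finite,bounded_lattice} set \<Rightarrow> bool" where
  "downsetJ X \<longleftrightarrow> X \<subseteq> JI \<and> (\<forall>j \<in> X. \<forall>k \<in> JI. k \<le> j \<longrightarrow> k \<in> X)"

definition level_decomp ::
  "('a::{finite,bounded_lattice} \<Rightarrow> real) \<Rightarrow> nat \<Rightarrow> (nat \<Rightarrow> 'a set) \<Rightarrow> (nat \<Rightarrow> real) \<Rightarrow> bool" where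
  "level_decomp f p X \<alpha> \<longleftrightarrow>
     (\<forall>i \<le> p. downsetJ (X i)) \<and> (\<forall>i < p. X i \<subset> X (Suc i)) \<and>
     (\<forall>i \<le> p. \<alpha> i > 0) \<and> (\<Sum>i\<le>p. \<alpha> i) = 1 \<and>
     (\<forall>j \<in> JI. \<bar>f j\<bar> = (\<Sum>i\<le>p. \<alpha> i * indicator (X i) j))"

(* bipolar natural extension (well defined by uniqueness of the decomposition and
   independence of the choice of x, as stated in the paper) *)
definition natext ::
  "(('a::{finite,bounded_lattice} \<Rightarrow> real) \<Rightarrow> real) \<Rightarrow> ('a \<Rightarrow> real) \<Rightarrow> real" where
  "natext F f = (SOME v. \<exists>x \<in> complemented. f \<in> Cx x \<and>
      (\<exists>p X \<alpha>. level_decomp f p X \<alpha> \<and>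
         v = (\<Sum>i\<le>p. \<alpha> i * F (\<lambda>j. indicator (X i \<inter> eta x) j - indicator (X i \<inter> eta (cmpl x)) j))))"

definition min1 :: "'a set \<Rightarrow> ('a \<Rightarrow> real) \<Rightarrow> real" where
  "min1 A g = (if A = {} then 1 else Min (g ` A))"

end

theory Submission
  imports Defs
begin

(* Write x' for the complement of x.  If f lies in C_x and
   |f| = sum_i alpha_i 1_{X_i} is a level decomposition along a chain of
   downsets of J(L), then each X_i \<inter> eta x and X_i \<inter> eta x' is of the form
   eta a, eta b with a \<sqinter> b = \<bottom> (Birkhoff representation), so the Moebius
   expansion writes every summand F(1_{X_i \<inter> eta x} - 1_{X_i \<inter> eta x'}) as
   a sum of m(s,t) over the pairs with eta s \<subseteq> X_i \<inter> eta x and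
   eta t \<subseteq> X_i \<inter> eta x'.  Exchanging the two sums, the weight collected
   by m(s,t) is a tail sum of the alpha_i, which equals
   min(min_{eta s} f^+, min_{eta t} f^-).

   Every admissible choice in the definition of the natural extension
   produces the same value. *)

section \<open>Covers and join-irreducible elements\<close>

lemma exists_lower_cover:
  fixes u j :: "'a::{finite,order}"
  assumes "u < j"
  shows "\<exists>c. u \<le> c \<and> covers j c"
proof -
  have "finite {z. u \<le> z \<and> z < j}" "{z. u \<le> z \<and> z < j} \<noteq> {}"
    using assms by auto
  then obtain c where c: "u \<le> c" "c < j"
    and maximal: "\<And>z. u \<le> z \<Longrightarrow> z < j \<Longrightarrow> c \<le> z \<Longrightarrow> c = z"
    using finite_has_maximal by (metis (no_types, lifting) mem_Collect_eq)
  have "covers j c"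
    unfolding covers_def
    using c maximal by (metis order.strict_iff_not order.trans)
  with c show ?thesis by blast
qed

lemma JI_ne_bot:
  fixes j :: "'a::{finite,bounded_lattice}"
  assumes "j \<in> JI"
  shows "j \<noteq> bot"
proof
  assume "j = bot"
  then have "{x. covers j x} = {}" by (auto simp: covers_def)
  with assms show False by (simp add: JI_def)
qed

lemma JI_lower_cover:
  fixes j :: "'a::{finite,bounded_lattice}"
  assumes "j \<in> JI"
  obtains c where "c < j" "\<And>u. u < j \<Longrightarrow> u \<le> c"
proof -
  from assms obtain c where c: "{x. covers j x} = {c}"
    by (auto simp: JI_def card_Suc_eq)
  have "u \<le> c" if "u < j" for u
    using exists_lower_cover[OF that] c by auto
  moreover have "c < j" using c by (auto simp: covers_def)
  ultimately show thesis using that by blast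
qed

lemma JI_join_prime:
  fixes j :: "'a::{finite,distrib_lattice,bounded_lattice}"
  assumes "j \<in> JI" "j \<le> sup a b"
  shows "j \<le> a \<or> j \<le> b"
proof (rule ccontr)
  assume not_below: "\<not> (j \<le> a \<or> j \<le> b)"
  obtain c where c: "c < j" "\<And>u. u < j \<Longrightarrow> u \<le> c"
    using JI_lower_cover assms(1) by blast
  have "j = sup (inf j a) (inf j b)"
    using assms(2) by (metis inf.absorb1 inf_sup_distrib1)
  moreover have "inf j a < j" "inf j b < j"
    using not_below by (simp_all add: less_le_not_le)
  ultimately have "j \<le> c" using c(2) by (metis sup_least)
  with c(1) show False by simp
qed

lemma distinct_lower_covers_join:
  fixes j :: "'a::lattice"
  assumes "covers j c1" "covers j c2" "c1 \<noteq> c2"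
  shows "sup c1 c2 = j"
proof (rule ccontr)
  assume "sup c1 c2 \<noteq> j"
  moreover have "sup c1 c2 \<le> j" using assms by (auto simp: covers_def)
  ultimately have "sup c1 c2 < j" by (simp add: order_less_le)
  then have "c1 = sup c1 c2" "c2 = sup c1 c2"
    using assms(1,2) unfolding covers_def
    by (metis sup.cobounded1 sup.cobounded2 order.not_eq_order_implies_strict)+
  with assms(3) show False by simp
qed

text \<open>Join-irreducibles separate the elements of a finite lattice: a minimal
  element of \<open>{z. z \<le> y \<and> \<not> z \<le> a}\<close> is join-irreducible.\<close>

lemma JI_separation:
  fixes y a :: "'a::{finite,bounded_lattice}"
  assumes "\<not> y \<le> a"
  shows "\<exists>j\<in>JI. j \<le> y \<and> \<not> j \<le> a"
proof -
  have "finite {z. z \<le> y \<and> \<not> z \<le> a}" "{z. z \<le> y \<and> \<not> z \<le> a} \<noteq> {}"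
    using assms by auto
  then obtain j where j: "j \<le> y" "\<not> j \<le> a"
    and minimal: "\<And>z. z \<le> y \<Longrightarrow> \<not> z \<le> a \<Longrightarrow> z \<le> j \<Longrightarrow> j = z"
    using finite_has_minimal by (metis (no_types, lifting) mem_Collect_eq)
  have below: "u \<le> a" if "u < j" for u
    using that j minimal by (metis order.strict_iff_not order.trans)
  have "bot < j" using j(2) bot.not_eq_extremum by fastforce
  then obtain c where c: "covers j c" using exists_lower_cover by blast
  have "{x. covers j x} = {c}"
  proof (rule ccontr)
    assume "{x. covers j x} \<noteq> {c}"
    with c obtain c2 where c2: "covers j c2" "c2 \<noteq> c" by auto
    have "c \<le> a" "c2 \<le> a" using below c c2 by (auto simp: covers_def)
    then have "sup c c2 \<le> a" by simp
    with distinct_lower_covers_join[OF c c2(1)] c2(2) j(2) show False by metis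
  qed
  then have "j \<in> JI" by (simp add: JI_def)
  with j show ?thesis by blast
qed

section \<open>The map eta\<close>

lemma eta_le_iff:
  fixes y a :: "'a::{finite,bounded_lattice}"
  shows "eta y \<subseteq> eta a \<longleftrightarrow> y \<le> a"
  using JI_separation[of y a] by (auto simp: eta_def)

lemma eta_bot: "eta (bot :: 'a::{finite,bounded_lattice}) = {}"
  using JI_ne_bot by (auto simp: eta_def bot_unique)

lemma eta_top: "eta (top :: 'a::{finite,bounded_lattice}) = JI"
  by (auto simp: eta_def)

lemma eta_inf: "eta (inf a b) = eta a \<inter> (eta b :: 'a::{finite,bounded_lattice} set)"
  by (auto simp: eta_def)

lemma eta_sup: "eta (sup a b) = eta a \<union> (eta b :: 'a::{finite,distrib_lattice,bounded_lattice} set)"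
  using JI_join_prime by (auto simp: eta_def intro: le_supI1 le_supI2)

text \<open>Birkhoff representation: every downset of J(L) is of the form eta a; take
  for a the join of its elements.\<close>

lemma eta_downward_closure:
  fixes S :: "'a::{finite,distrib_lattice,bounded_lattice} set"
  assumes "S \<subseteq> JI"
  shows "\<exists>a. eta a = {j \<in> JI. \<exists>k\<in>S. j \<le> k}"
  using finite[of S] assms
proof (induction S rule: finite_induct)
  case empty
  show ?case using eta_bot by auto
next
  case (insert k S)
  then obtain a where a: "eta a = {j \<in> JI. \<exists>k\<in>S. j \<le> k}" by auto
  have "eta (sup a k) = eta a \<union> eta k" by (rule eta_sup)
  then have "eta (sup a k) = {j \<in> JI. \<exists>k'\<in>insert k S. j \<le> k'}"
    unfolding a by (auto simp: eta_def)
  then show ?case by blast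
qed

lemma downset_eta_rep:
  fixes X :: "'a::{finite,distrib_lattice,bounded_lattice} set"
  assumes "downsetJ X"
  obtains a where "eta a = X"
proof -
  have "X \<subseteq> JI" using assms by (simp add: downsetJ_def)
  moreover have "{j \<in> JI. \<exists>k\<in>X. j \<le> k} = X" using assms by (auto simp: downsetJ_def)
  ultimately show thesis using eta_downward_closure that by metis
qed

text \<open>In a distributive lattice complements are unique, so cmpl x is a complement of x.\<close>

lemma cmpl_complement:
  fixes x :: "'a::{distrib_lattice,bounded_lattice}"
  assumes "x \<in> complemented"
  shows "inf x (cmpl x) = bot" "sup x (cmpl x) = top"
proof -
  from assms obtain y where y: "inf x y = bot" "sup x y = top"
    by (auto simp: complemented_def)
  have below: "z \<le> z'" if "inf x z = bot" "sup x z' = top" for z z'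
  proof -
    have "z = inf z (sup x z')" using that(2) by simp
    also have "\<dots> = inf z z'" using that(1) by (simp add: inf_sup_distrib1 inf_commute)
    finally show ?thesis by (metis inf.orderI)
  qed
  have "cmpl x = y"
    unfolding cmpl_def using y below by (blast intro: the_equality order.antisym)
  with y show "inf x (cmpl x) = bot" "sup x (cmpl x) = top" by simp_all
qed

lemma complement_partition:
  fixes x :: "'a::{finite,distrib_lattice,bounded_lattice}"
  assumes "x \<in> complemented"
  shows "eta x \<union> eta (cmpl x) = JI" "eta x \<inter> eta (cmpl x) = {}"
  using cmpl_complement[OF assms] eta_sup[of x "cmpl x"] eta_inf[of x "cmpl x"]
  by (simp_all add: eta_top eta_bot)

lemma moebius_expansion_downsets:
  fixes F :: "(('a::{finite,distrib_lattice,bounded_lattice}) \<Rightarrow> real) \<Rightarrow> real"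
    and m :: "'a \<times> 'a \<Rightarrow> real"
  assumes mob: "\<forall>(x, y) \<in> (Ltilde :: ('a \<times> 'a) set).
               F (\<lambda>j. indicator (eta x) j - indicator (eta y) j)
                 = (\<Sum>(z, t) \<in> {(z, t) \<in> Ltilde. z \<le> x \<and> t \<le> y}. m (z, t))"
    and "downsetJ A" "downsetJ B" "A \<inter> B = {}"
  shows "F (\<lambda>j. indicator A j - indicator B j) =
    (\<Sum>(s, t) \<in> Ltilde. m (s, t) * (if eta s \<subseteq> A \<and> eta t \<subseteq> B then 1 else 0))"
proof -
  obtain a b where a: "eta a = A" and b: "eta b = B"
    using downset_eta_rep assms(2,3) by metis
  have "eta (inf a b) \<subseteq> eta bot" using a b assms(4) by (simp add: eta_inf eta_bot)
  then have "(a, b) \<in> Ltilde" by (simp add: eta_le_iff Ltilde_def bot_unique)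
  then have "F (\<lambda>j. indicator A j - indicator B j) =
      (\<Sum>(z, t) \<in> {(z, t) \<in> Ltilde. z \<le> a \<and> t \<le> b}. m (z, t))"
    using mob a b by auto
  also have "\<dots> = (\<Sum>st \<in> Ltilde. if fst st \<le> a \<and> snd st \<le> b then m st else 0)"
    by (subst sum.inter_filter[symmetric]) (auto intro!: sum.cong)
  also have "\<dots> = (\<Sum>(s, t) \<in> Ltilde. m (s, t) * (if eta s \<subseteq> A \<and> eta t \<subseteq> B then 1 else 0))"
    by (rule sum.cong) (auto simp: a[symmetric] b[symmetric] eta_le_iff)
  finally show ?thesis .
qed

lemma min1_cong: "(\<And>j. j \<in> A \<Longrightarrow> g j = v j) \<Longrightarrow> min1 A g = min1 A v"
  unfolding min1_def by (simp cong: image_cong)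

lemma min1_nonneg:
  fixes g :: "'b \<Rightarrow> real"
  assumes "finite A" "\<And>j. j \<in> A \<Longrightarrow> g j \<ge> 0"
  shows "min1 A g \<ge> 0"
  using assms by (auto simp: min1_def)

lemma min1_zero:
  fixes g :: "'b \<Rightarrow> real"
  assumes "finite A" "\<And>j. j \<in> A \<Longrightarrow> g j \<ge> 0" "j0 \<in> A" "g j0 = 0"
  shows "min1 A g = 0"
proof -
  have "A \<noteq> {}" using assms(3) by auto
  moreover have "Min (g ` A) \<le> 0" using assms by (metis Min_le finite_imageI image_eqI)
  moreover have "min1 A g \<ge> 0" using assms(1,2) by (rule min1_nonneg)
  ultimately show ?thesis by (simp add: min1_def)
qed

lemma min1_le_1:
  fixes v :: "'b \<Rightarrow> real"
  assumes "finite A" "\<And>j. j \<in> A \<Longrightarrow> v j \<le> 1"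
  shows "min1 A v \<le> 1"
  using assms by (auto simp: min1_def Min_le_iff)

text \<open>The convention \<open>min1 {} = 1\<close> makes min1 split over unions as long as
  the values are at most 1.\<close>

lemma min1_Un:
  fixes v :: "'b \<Rightarrow> real"
  assumes "finite A" "finite B" "\<And>j. j \<in> A \<union> B \<Longrightarrow> v j \<le> 1"
  shows "min1 (A \<union> B) v = min (min1 A v) (min1 B v)"
proof -
  have "min1 A v \<le> 1" "min1 B v \<le> 1"
    using assms by (auto intro: min1_le_1)
  then show ?thesis
    using assms(1,2) by (cases "A = {}"; cases "B = {}") (simp_all add: min1_def image_Un Min_Un)
qed

lemma chain_mono:
  fixes X :: "nat \<Rightarrow> 'b set"
  assumes "\<forall>i<p. X i \<subset> X (Suc i)" "i \<le> i'" "i' \<le> p"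
  shows "X i \<subseteq> X i'"
  using assms(2,3)
proof (induction i')
  case (Suc n)
  show ?case
  proof (cases "i = Suc n")
    case False
    then have "X i \<subseteq> X n" using Suc by simp
    moreover have "X n \<subset> X (Suc n)" using assms(1) Suc.prems by simp
    ultimately show ?thesis by blast
  qed simp
qed simp

lemma chain_last_entry:
  fixes X :: "nat \<Rightarrow> 'b set"
  assumes chain: "\<And>i i'. i \<le> i' \<Longrightarrow> i' \<le> p \<Longrightarrow> X i \<subseteq> X i'"
  shows "finite A \<Longrightarrow> A \<noteq> {} \<Longrightarrow> \<exists>j\<in>A. \<forall>i\<le>p. j \<in> X i \<longrightarrow> A \<subseteq> X i"
proof (induction A rule: finite_ne_induct)
  case (singleton x)
  then show ?case by auto
next
  case (insert k A)
  then obtain j where j: "j \<in> A" "\<forall>i\<le>p. j \<in> X i \<longrightarrow> A \<subseteq> X i" by auto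
  show ?case
  proof (cases "\<forall>i\<le>p. k \<in> X i \<longrightarrow> j \<in> X i")
    case True
    then show ?thesis using j by (intro bexI[of _ k]) auto
  next
    case False
    then obtain i0 where i0: "i0 \<le> p" "k \<in> X i0" "j \<notin> X i0" by auto
    have "insert k A \<subseteq> X i" if i: "i \<le> p" "j \<in> X i" for i
    proof -
      have "\<not> i \<le> i0" using chain[of i i0] i i0 by auto
      then have "i0 \<le> i" by simp
      then show ?thesis using chain[of i0 i] i j i0 by auto
    qed
    then show ?thesis using j(1) by blast
  qed
qed

lemma level_sum_min1:
  fixes X :: "nat \<Rightarrow> 'b set" and \<alpha> :: "nat \<Rightarrow> real"
  assumes chain: "\<And>i i'. i \<le> i' \<Longrightarrow> i' \<le> p \<Longrightarrow> X i \<subseteq> X i'"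
    and apos: "\<And>i. i \<le> p \<Longrightarrow> \<alpha> i \<ge> 0"
    and asum: "(\<Sum>i\<le>p. \<alpha> i) = 1"
    and fin: "finite A"
    and hv: "\<And>j. j \<in> A \<Longrightarrow> v j = (\<Sum>i\<le>p. \<alpha> i * indicator (X i) j)"
  shows "(\<Sum>i\<le>p. \<alpha> i * (if A \<subseteq> X i then 1 else 0)) = min1 A v"
proof (cases "A = {}")
  case True
  then show ?thesis using asum by (simp add: min1_def)
next
  case False
  obtain j where j: "j \<in> A" "\<forall>i\<le>p. j \<in> X i \<longrightarrow> A \<subseteq> X i"
    using chain_last_entry[where p = p and X = X, OF chain fin False] by blast
  have eq: "(\<Sum>i\<le>p. \<alpha> i * (if A \<subseteq> X i then 1 else 0)) = v j"
    unfolding hv[OF j(1)] by (rule sum.cong) (use j in \<open>auto simp: indicator_def\<close>)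
  have "v j \<le> v j'" if "j' \<in> A" for j'
  proof -
    have "(\<Sum>i\<le>p. \<alpha> i * (if A \<subseteq> X i then 1 else 0)) \<le> (\<Sum>i\<le>p. \<alpha> i * indicator (X i) j')"
      by (rule sum_mono) (use apos that in \<open>auto simp: indicator_def\<close>)
    then show ?thesis using eq hv[OF that] by simp
  qed
  then have "Min (v ` A) = v j" using fin j(1) by (intro Min_eqI) auto
  then show ?thesis using eq False by (simp add: min1_def)
qed

section \<open>Level decompositions\<close>

lemma descending_values:
  fixes v :: "'b \<Rightarrow> real"
  assumes "finite J" and range: "\<And>j. j \<in> J \<Longrightarrow> 0 \<le> v j \<and> v j \<le> 1"
  obtains p and c :: "nat \<Rightarrow> real"
  where "c 0 = 1" "c (Suc p) = 0" "\<And>i k. i < k \<Longrightarrow> k \<le> Suc p \<Longrightarrow> c k < c i"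
    "\<And>i. 0 < i \<Longrightarrow> i \<le> p \<Longrightarrow> c i \<in> v ` J"
    "\<And>j. j \<in> J \<Longrightarrow> \<exists>k\<le>Suc p. v j = c k"
proof -
  define ds where "ds = rev (sorted_list_of_set (v ` J - {0, 1}))"
  define cs where "cs = 1 # ds @ [0 :: real]"
  have set_ds: "set ds = v ` J - {0, 1}" using assms(1) by (simp add: ds_def)
  have inner: "0 < d \<and> d < 1" if "d \<in> set ds" for d
    using that range unfolding set_ds by fastforce
  have "sorted_wrt (>) ds" by (simp add: ds_def sorted_wrt_rev)
  then have sorted: "sorted_wrt (>) cs"
    using inner by (auto simp: cs_def sorted_wrt_append)
  have len: "length cs = Suc (Suc (length ds))" by (simp add: cs_def)
  show thesis
  proof (rule that[of "(!) cs" "length ds"])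
    show "cs ! 0 = 1" "cs ! Suc (length ds) = 0" by (simp_all add: cs_def nth_append)
    show "cs ! k < cs ! i" if "i < k" "k \<le> Suc (length ds)" for i k
      using sorted_wrt_nth_less[OF sorted that(1)] that(2) len by simp
    show "cs ! i \<in> v ` J" if "0 < i" "i \<le> length ds" for i
    proof -
      have "cs ! i = ds ! (i - 1)" using that by (cases i) (simp_all add: cs_def nth_append)
      then show ?thesis using that set_ds nth_mem[of "i - 1" ds] by auto
    qed
    show "\<exists>k\<le>Suc (length ds). v j = cs ! k" if "j \<in> J" for j
    proof -
      have "v j \<in> set cs" using that set_ds by (auto simp: cs_def)
      then show ?thesis using len by (metis in_set_conv_nth less_Suc_eq_le)
    qed
  qed
qed

text \<open>Every f with |f| nonincreasing and bounded by 1 has a level decomposition: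
  X i is the superlevel set of |f| at the i-th value, \<alpha> i the gap to the next.\<close>

lemma level_decomp_exists:
  fixes f :: "'a::{finite,bounded_lattice} \<Rightarrow> real"
  assumes anti: "abs_nonincr f" and bound: "\<And>j. j \<in> JI \<Longrightarrow> \<bar>f j\<bar> \<le> 1"
  shows "\<exists>p X \<alpha>. level_decomp f p X \<alpha>"
proof -
  obtain p c where c0: "c 0 = 1" and cp: "c (Suc p) = 0"
    and cdec: "\<And>i k. i < k \<Longrightarrow> k \<le> Suc p \<Longrightarrow> c k < c i"
    and attained: "\<And>i. 0 < i \<Longrightarrow> i \<le> p \<Longrightarrow> c i \<in> (\<lambda>j. \<bar>f j\<bar>) ` JI"
    and value_index: "\<And>j. j \<in> JI \<Longrightarrow> \<exists>k\<le>Suc p. \<bar>f j\<bar> = c k"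
    by (rule descending_values[of JI "\<lambda>j. \<bar>f j\<bar>"]) (use bound in auto)
  have c_le_iff: "c i \<le> c k \<longleftrightarrow> k \<le> i" if "i \<le> Suc p" "k \<le> Suc p" for i k
    using cdec[of i k] cdec[of k i] that by (cases i k rule: linorder_cases) auto
  define X where "X i = {j \<in> JI. c i \<le> \<bar>f j\<bar>}" for i
  define \<alpha> where "\<alpha> i = c i - c (Suc i)" for i
  have "level_decomp f p X \<alpha>"
    unfolding level_decomp_def
  proof (intro conjI allI impI ballI)
    fix i
    show "downsetJ (X i)"
      using anti by (auto simp: downsetJ_def X_def abs_nonincr_def intro: order.trans)
    assume i: "i < p"
    obtain j where j: "j \<in> JI" "\<bar>f j\<bar> = c (Suc i)" using attained[of "Suc i"] i by auto
    have "j \<in> X (Suc i) - X i" using j cdec[of i "Suc i"] i by (auto simp: X_def)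
    moreover have "X i \<subseteq> X (Suc i)" using cdec[of i "Suc i"] i by (auto simp: X_def)
    ultimately show "X i \<subset> X (Suc i)" by blast
  next
    fix i assume "i \<le> p"
    then show "\<alpha> i > 0" using cdec[of i "Suc i"] by (simp add: \<alpha>_def)
  next
    show "(\<Sum>i\<le>p. \<alpha> i) = 1"
      using sum_telescope[of "\<lambda>i. c i" p] c0 cp by (simp add: \<alpha>_def)
  next
    fix j :: 'a assume "j \<in> JI"
    then obtain k where k: "k \<le> Suc p" "\<bar>f j\<bar> = c k" using value_index by blast
    have "(\<Sum>i\<le>p. \<alpha> i * indicator (X i) j) = (\<Sum>i\<le>p. if k \<le> i then c i - c (Suc i) else 0)"
      using \<open>j \<in> JI\<close> k c_le_iff by (intro sum.cong) (auto simp: X_def \<alpha>_def indicator_def)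
    also have "\<dots> = (\<Sum>i\<in>{k..p}. c i - c (Suc i))"
    proof -
      have "{i\<in>{..p}. k \<le> i} = {k..p}" by auto
      then show ?thesis by (simp add: sum.inter_filter[symmetric])
    qed
    also have "\<dots> = c k - c (Suc p)"
      using sum_Suc_diff[of k p "\<lambda>i. - c i"] k by simp
    finally show "\<bar>f j\<bar> = (\<Sum>i\<le>p. \<alpha> i * indicator (X i) j)" using k cp by simp
  qed
  then show ?thesis by blast
qed

text \<open>The total weight of the
  levels X i with \<open>S \<subseteq> X i \<inter> P\<close> and \<open>T \<subseteq> X i \<inter> N\<close> is
  \<open>min (min f\<^sup>+ on S) (min f\<^sup>- on T)\<close>: if S meets N or T meets P both sides
  vanish, otherwise this is the minimum of |f| on S \<union> T.\<close>

lemma signed_level_weight: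
  fixes f :: "'b \<Rightarrow> real" and X :: "nat \<Rightarrow> 'b set" and \<alpha> :: "nat \<Rightarrow> real"
  assumes chain: "\<And>i i'. i \<le> i' \<Longrightarrow> i' \<le> p \<Longrightarrow> X i \<subseteq> X i'"
    and apos: "\<And>i. i \<le> p \<Longrightarrow> \<alpha> i \<ge> 0" and asum: "(\<Sum>i\<le>p. \<alpha> i) = 1"
    and fin: "finite J"
    and hv: "\<And>j. j \<in> J \<Longrightarrow> \<bar>f j\<bar> = (\<Sum>i\<le>p. \<alpha> i * indicator (X i) j)"
    and split: "P \<union> N = J" and pos: "\<And>j. j \<in> P \<Longrightarrow> f j \<ge> 0"
    and neg: "\<And>j. j \<in> N \<Longrightarrow> f j \<le> 0"
    and ST: "S \<subseteq> J" "T \<subseteq> J"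
  shows "(\<Sum>i\<le>p. \<alpha> i * (if S \<subseteq> X i \<inter> P \<and> T \<subseteq> X i \<inter> N then 1 else 0)) =
    min (min1 S (\<lambda>j. max (f j) 0)) (min1 T (\<lambda>j. max (- f j) 0))"
proof (cases "S \<subseteq> P \<and> T \<subseteq> N")
  case True
  have bound: "\<bar>f j\<bar> \<le> 1" if "j \<in> J" for j
  proof -
    have "(\<Sum>i\<le>p. \<alpha> i * indicator (X i) j) \<le> (\<Sum>i\<le>p. \<alpha> i)"
      by (rule sum_mono) (use apos in \<open>auto simp: indicator_def\<close>)
    then show ?thesis using hv[OF that] asum by simp
  qed
  have fin_ST: "finite S" "finite T" using ST fin finite_subset by auto
  have "(\<Sum>i\<le>p. \<alpha> i * (if S \<subseteq> X i \<inter> P \<and> T \<subseteq> X i \<inter> N then 1 else 0)) =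
      (\<Sum>i\<le>p. \<alpha> i * (if S \<union> T \<subseteq> X i then 1 else 0))"
    using True by (intro sum.cong) auto
  also have "\<dots> = min1 (S \<union> T) (\<lambda>j. \<bar>f j\<bar>)"
    using ST fin_ST by (intro level_sum_min1[OF chain apos asum]) (auto intro: hv)
  also have "\<dots> = min (min1 S (\<lambda>j. \<bar>f j\<bar>)) (min1 T (\<lambda>j. \<bar>f j\<bar>))"
    using ST fin_ST bound by (intro min1_Un) auto
  also have "min1 S (\<lambda>j. \<bar>f j\<bar>) = min1 S (\<lambda>j. max (f j) 0)"
    using True pos by (intro min1_cong) auto
  also have "min1 T (\<lambda>j. \<bar>f j\<bar>) = min1 T (\<lambda>j. max (- f j) 0)"
    using True neg by (intro min1_cong) auto
  finally show ?thesis .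
next
  case False
  have fin_ST: "finite S" "finite T" using ST fin finite_subset by auto
  have "(\<Sum>i\<le>p. \<alpha> i * (if S \<subseteq> X i \<inter> P \<and> T \<subseteq> X i \<inter> N then 1 else 0)) = 0"
    using False by (intro sum.neutral) auto
  moreover have "min1 S (\<lambda>j. max (f j) 0) = 0 \<or> min1 T (\<lambda>j. max (- f j) 0) = 0"
  proof (cases "S \<subseteq> P")
    case True
    with False obtain j where "j \<in> T" "j \<in> P" using ST split by blast
    then have "min1 T (\<lambda>j. max (- f j) 0) = 0"
      using pos fin_ST by (intro min1_zero[of _ _ j]) auto
    then show ?thesis ..
  next
    case False
    then obtain j where "j \<in> S" "j \<in> N" using ST split by blast
    then have "min1 S (\<lambda>j. max (f j) 0) = 0"
      using neg fin_ST by (intro min1_zero[of _ _ j]) auto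
    then show ?thesis ..
  qed
  moreover have "min1 S (\<lambda>j. max (f j) 0) \<ge> 0" "min1 T (\<lambda>j. max (- f j) 0) \<ge> 0"
    using fin_ST by (auto intro: min1_nonneg)
  ultimately show ?thesis by linarith
qed

section \<open>The natural extension\<close>

lemma natext_expression_eq:
  fixes F :: "(('a::{finite,distrib_lattice,bounded_lattice}) \<Rightarrow> real) \<Rightarrow> real"
    and m :: "'a \<times> 'a \<Rightarrow> real"
    and f :: "'a \<Rightarrow> real"
  assumes mob: "\<forall>(x, y) \<in> (Ltilde :: ('a \<times> 'a) set).
               F (\<lambda>j. indicator (eta x) j - indicator (eta y) j)
                 = (\<Sum>(z, t) \<in> {(z, t) \<in> Ltilde. z \<le> x \<and> t \<le> y}. m (z, t))"
    and x: "x \<in> complemented" and fx: "f \<in> Cx x" and dec: "level_decomp f p X \<alpha>"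
  shows "(\<Sum>i\<le>p. \<alpha> i * F (\<lambda>j. indicator (X i \<inter> eta x) j - indicator (X i \<inter> eta (cmpl x)) j)) =
    (\<Sum>(s, t) \<in> Ltilde. m (s, t) *
        min (min1 (eta s) (\<lambda>j. max (f j) 0)) (min1 (eta t) (\<lambda>j. max (- f j) 0)))"
proof -
  define P N where "P = eta x" and "N = eta (cmpl x)"
  define w where "w i s t = (if eta s \<subseteq> X i \<inter> P \<and> eta t \<subseteq> X i \<inter> N then 1 else 0 :: real)"
    for i s t
  have down: "\<And>i. i \<le> p \<Longrightarrow> downsetJ (X i)" and apos: "\<And>i. i \<le> p \<Longrightarrow> \<alpha> i \<ge> 0"
    and asum: "(\<Sum>i\<le>p. \<alpha> i) = 1"
    and hv: "\<And>j. j \<in> JI \<Longrightarrow> \<bar>f j\<bar> = (\<Sum>i\<le>p. \<alpha> i * indicator (X i) j)"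
    using dec by (auto simp: level_decomp_def less_imp_le)
  have "\<forall>i<p. X i \<subset> X (Suc i)" using dec by (simp add: level_decomp_def)
  then have chain: "\<And>i i'. i \<le> i' \<Longrightarrow> i' \<le> p \<Longrightarrow> X i \<subseteq> X i'"
    by (rule chain_mono)
  have PN: "P \<union> N = JI" "P \<inter> N = {}"
    using complement_partition[OF x] by (simp_all add: P_def N_def)
  have summand: "F (\<lambda>j. indicator (X i \<inter> P) j - indicator (X i \<inter> N) j) =
      (\<Sum>(s, t) \<in> Ltilde. m (s, t) * w i s t)" if "i \<le> p" for i
    unfolding w_def using PN(2) down[OF that]
    by (intro moebius_expansion_downsets[OF mob])
      (auto simp: P_def N_def downsetJ_def eta_def)
  have weight: "(\<Sum>i\<le>p. \<alpha> i * w i s t) =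
      min (min1 (eta s) (\<lambda>j. max (f j) 0)) (min1 (eta t) (\<lambda>j. max (- f j) 0))" for s t
    unfolding w_def
    by (rule signed_level_weight[OF chain apos asum finite hv PN(1)])
      (use fx in \<open>auto simp: Cx_def P_def N_def eta_def\<close>)
  have "(\<Sum>i\<le>p. \<alpha> i * F (\<lambda>j. indicator (X i \<inter> P) j - indicator (X i \<inter> N) j))
      = (\<Sum>i\<le>p. \<Sum>(s, t) \<in> Ltilde. \<alpha> i * (m (s, t) * w i s t))"
    by (simp add: summand sum_distrib_left split_def)
  also have "\<dots> = (\<Sum>(s, t) \<in> Ltilde. m (s, t) * (\<Sum>i\<le>p. \<alpha> i * w i s t))"
    by (subst sum.swap) (simp add: sum_distrib_left split_def mult_ac)
  finally show ?thesis by (simp add: weight P_def N_def)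
qed

lemma natext_eqI:
  fixes F :: "('a::{finite,bounded_lattice} \<Rightarrow> real) \<Rightarrow> real"
  assumes f: "f \<in> geomreal"
    and all_eq: "\<And>x p X \<alpha>. x \<in> complemented \<Longrightarrow> f \<in> Cx x \<Longrightarrow> level_decomp f p X \<alpha> \<Longrightarrow>
      (\<Sum>i\<le>p. \<alpha> i * F (\<lambda>j. indicator (X i \<inter> eta x) j - indicator (X i \<inter> eta (cmpl x)) j)) = V"
  shows "natext F f = V"
proof -
  define admissible where "admissible v \<longleftrightarrow> (\<exists>x \<in> complemented. f \<in> Cx x \<and>
      (\<exists>p X \<alpha>. level_decomp f p X \<alpha> \<and>
         v = (\<Sum>i\<le>p. \<alpha> i * F (\<lambda>j. indicator (X i \<inter> eta x) j - indicator (X i \<inter> eta (cmpl x)) j))))"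
    for v
  from f obtain x where x: "x \<in> complemented" "f \<in> Cx x" by (auto simp: geomreal_def)
  then have "abs_nonincr f" "\<And>j. j \<in> JI \<Longrightarrow> \<bar>f j\<bar> \<le> 1" by (auto simp: Cx_def)
  then obtain p X \<alpha> where dec: "level_decomp f p X \<alpha>" using level_decomp_exists by blast
  have "admissible V"
    unfolding admissible_def using x dec all_eq[OF x dec] by (intro bexI[of _ x]) auto
  moreover have "v = V" if "admissible v" for v
  proof -
    from that obtain x p X \<alpha> where "x \<in> complemented" "f \<in> Cx x" "level_decomp f p X \<alpha>"
      "v = (\<Sum>i\<le>p. \<alpha> i * F (\<lambda>j. indicator (X i \<inter> eta x) j - indicator (X i \<inter> eta (cmpl x)) j))"
      unfolding admissible_def by blast
    then show ?thesis using all_eq by simp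
  qed
  ultimately have "(SOME v. admissible v) = V" by (rule someI2)
  then show ?thesis by (simp add: natext_def admissible_def)
qed

theorem mainTheorem9:
  fixes F :: "(('a::{finite,distrib_lattice,bounded_lattice}) \<Rightarrow> real) \<Rightarrow> real"
    and m :: "'a \<times> 'a \<Rightarrow> real"
    and f :: "'a \<Rightarrow> real"
  assumes reg: "regular_mosaic TYPE('a)"
    and mob: "\<forall>(x, y) \<in> (Ltilde :: ('a \<times> 'a) set).
               F (\<lambda>j. indicator (eta x) j - indicator (eta y) j)
                 = (\<Sum>(z, t) \<in> {(z, t) \<in> Ltilde. z \<le> x \<and> t \<le> y}. m (z, t))"
    and hf: "f \<in> geomreal"
  shows "natext F f =
    (\<Sum>(s, t) \<in> Ltilde. m (s, t) *
        min (min1 (eta s) (\<lambda>j. max (f j) 0)) (min1 (eta t) (\<lambda>j. max (- f j) 0)))"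
  using hf natext_expression_eq[OF mob] by (rule natext_eqI)

end
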